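(* Let $T\subset\mathbb{R}^2$ be a triangle and let $\Lambda\subset\mathbb{R}^2$ be a $2$-dimensional lattice. If $T$ is lattice complete with respect to $\Lambda$, then $T$ is lattice reduced with respect to $\Lambda$. The converse does not hold: there exist a $2$-dimensional lattice and a triangle that is lattice reduced but not lattice complete with respect to it.
   Context: A lattice $\Lambda\subset\mathbb{R}^2$ is a discrete subgroup spanning $\mathbb{R}^2$, with dual lattice $\Lambda^\star=\{y: x\cdot y\in\mathbb{Z}\ \forall x\in\Lambda\}$. For a convex body $C$ (compact convex set with non-empty interior), the lattice width is $\mathrm{wdt}_\Lambda(C)=\min_{y\in\Lambda^\star\setminus\{0\}}\max_{a,b\in C}y\cdot(a-b)$. A segment $[a,b]$ is a lattice segment if $b-a$ is parallel to a nonzero vector of $\Lambda$; its lattice length is $|b-a|/|v|$ where $v$ generates $\Lambda\cap\mathrm{span}\{b-a\}$ and is a positive multiple of $b-a$. The lattice diameter $\mathrm{diam}_\Lambda(C)$ is the maximum lattice length of a lattice segment in $C$. $C$ is lattice reduced if no convex body $C'\subsetneq C$ has $\mathrm{wdt}_\Lambda(C')=\mathrm{wdt}_\Lambda(C)$; lattice complete if no convex body $C'\supsetneq C$ has $\mathrm{diam}_\Lambda(C')=\mathrm{diam}_\Lambda(C)$. *)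

theory Defs
  imports "HOL-Analysis.Analysis"
begin

type_synonym pt = "real ^ 2"

definition is_lattice :: "pt set \<Rightarrow> bool" where
  "is_lattice L \<longleftrightarrow>
     0 \<in> L \<and> (\<forall>x\<in>L. \<forall>y\<in>L. x - y \<in> L) \<and>
     (\<exists>e>0. \<forall>x\<in>L. x \<noteq> 0 \<longrightarrow> e \<le> norm x) \<and>
     span L = UNIV"

definition dual_lattice :: "pt set \<Rightarrow> pt set" where
  "dual_lattice L = {y. \<forall>x\<in>L. x \<bullet> y \<in> \<int>}"

definition convex_body :: "pt set \<Rightarrow> bool" where
  "convex_body C \<longleftrightarrow> compact C \<and> convex C \<and> interior C \<noteq> {}"

definition dir_width :: "pt \<Rightarrow> pt set \<Rightarrow> real" where
  "dir_width y C = Sup {y \<bullet> (a - b) | a b. a \<in> C \<and> b \<in> C}"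

definition lattice_width :: "pt set \<Rightarrow> pt set \<Rightarrow> real" where
  "lattice_width L C = Inf {dir_width y C | y. y \<in> dual_lattice L \<and> y \<noteq> 0}"

definition lattice_generator :: "pt set \<Rightarrow> pt \<Rightarrow> pt \<Rightarrow> pt \<Rightarrow> bool" where
  "lattice_generator L a b v \<longleftrightarrow>
     v \<in> L \<and> v \<noteq> 0 \<and> (\<exists>t>0. v = t *\<^sub>R (b - a)) \<and>
     L \<inter> span {b - a} = range (\<lambda>k::int. of_int k *\<^sub>R v)"

definition lattice_lengths :: "pt set \<Rightarrow> pt set \<Rightarrow> real set" where
  "lattice_lengths L C =
     {norm (b - a) / norm v | a b v. a \<in> C \<and> b \<in> C \<and> a \<noteq> b \<and> lattice_generator L a b v}"

definition lattice_diameter :: "pt set \<Rightarrow> pt set \<Rightarrow> real" where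
  "lattice_diameter L C = Sup (lattice_lengths L C)"

definition lattice_reduced :: "pt set \<Rightarrow> pt set \<Rightarrow> bool" where
  "lattice_reduced L C \<longleftrightarrow> convex_body C \<and>
     \<not> (\<exists>C'. convex_body C' \<and> C' \<subset> C \<and> lattice_width L C' = lattice_width L C)"

definition lattice_complete :: "pt set \<Rightarrow> pt set \<Rightarrow> bool" where
  "lattice_complete L C \<longleftrightarrow> convex_body C \<and>
     \<not> (\<exists>C'. convex_body C' \<and> C \<subset> C' \<and> lattice_diameter L C' = lattice_diameter L C)"

definition is_triangle :: "pt set \<Rightarrow> bool" where
  "is_triangle T \<longleftrightarrow> (\<exists>a b c. \<not> collinear {a, b, c} \<and> T = convex hull {a, b, c})"

end

(*
  Let T = conv{a, b, c} be lattice complete with lattice diameter d. No nonzero lattice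
  vector g has d g in the open hexagon int(T - T), for that would give a lattice segment
  in T longer than d. Testing completeness against T enlarged by a point just beyond the
  midpoint of an edge shows that for every vertex some lattice vector h carries the vertex
  to a + d h in the relative interior of the opposite edge. The sum of the three such
  vectors lies in the hexagon, hence vanishes, so all three divide their edges in one ratio
  alpha; two of them then form a basis of the lattice (their fundamental parallelogram, scaled
  by d, meets the hexagon only in 0). The dual functional taking the values 1 and -1 on this
  basis attains the lattice width of T, and a and b are the unique minimum and maximum of it
  on T; rotating the triangle does the same for c. Hence every vertex is strictly exposed in
  a lattice-width direction, and no proper convex subset of T keeps the width.

  For the converse, conv{0, e1, e2} is reduced for Z^2 (each vertex is exposed in one of the
  width directions e1, e2, -(e1 + e2)), but the unit square has the same lattice diameter 1.
*)

theory Submission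
  imports Defs
begin

section \<open>Lattices and lattice lengths\<close>

lemma lattice_zero: "is_lattice L \<Longrightarrow> 0 \<in> L"
  by (simp add: is_lattice_def)

lemma lattice_diff: "is_lattice L \<Longrightarrow> x \<in> L \<Longrightarrow> y \<in> L \<Longrightarrow> x - y \<in> L"
  by (simp add: is_lattice_def)

lemma lattice_uminus: "is_lattice L \<Longrightarrow> x \<in> L \<Longrightarrow> - x \<in> L"
  using lattice_diff[of L 0 x] lattice_zero[of L] by simp

lemma lattice_add: "is_lattice L \<Longrightarrow> x \<in> L \<Longrightarrow> y \<in> L \<Longrightarrow> x + y \<in> L"
  using lattice_diff[of L x "- y"] lattice_uminus[of L y] by simp

lemma lattice_of_int_scaleR:
  assumes L: "is_lattice L" and x: "x \<in> L"
  shows "of_int k *\<^sub>R x \<in> L"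
proof (induction k rule: int_induct[where k = 0])
  case base
  show ?case using lattice_zero[OF L] by simp
next
  case (step1 i)
  have "of_int (i + 1) *\<^sub>R x = of_int i *\<^sub>R x + x" by (simp add: scaleR_left_distrib)
  then show ?case using lattice_add[OF L step1(2) x] by simp
next
  case (step2 i)
  have "of_int (i - 1) *\<^sub>R x = of_int i *\<^sub>R x - x" by (simp add: scaleR_left_diff_distrib)
  then show ?case using lattice_diff[OF L step2(2) x] by simp
qed

lemma uniform_discrete_lattice:
  assumes "is_lattice L"
  shows "uniform_discrete L"
proof -
  obtain e where "e > 0" and e: "\<And>x. x \<in> L \<Longrightarrow> x \<noteq> 0 \<Longrightarrow> e \<le> norm x"
    using assms by (auto simp: is_lattice_def)
  have "x = y" if "x \<in> L" "y \<in> L" "dist x y < e" for x y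
    using e[OF lattice_diff[OF assms that(1,2)]] that(3) by (force simp: dist_norm)
  then show ?thesis using \<open>e > 0\<close> unfolding uniform_discrete_def by blast
qed

lemma finite_lattice_Int_bounded:
  assumes "is_lattice L" "bounded S"
  shows "finite (L \<inter> S)"
proof -
  have "uniform_discrete (L \<inter> S)"
    using uniform_discrete_lattice[OF assms(1)] by (rule uniform_discrete_subset) blast
  moreover have "bounded (L \<inter> S)" using assms(2) by (rule bounded_subset) blast
  ultimately show ?thesis using uniform_discrete_finite_iff by blast
qed

lemma lattice_nonzero_exists:
  assumes "is_lattice L"
  obtains g where "g \<in> L" "g \<noteq> 0"
proof -
  have "\<not> L \<subseteq> {0}"
  proof
    assume "L \<subseteq> {0}"
    then have "span L \<subseteq> {0}" by (metis span_empty span_insert_0 span_mono)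
    moreover have "axis 1 1 \<in> span L" using assms by (simp add: is_lattice_def)
    ultimately show False by (auto simp: axis_eq_0_iff)
  qed
  then show ?thesis using that by blast
qed

lemma finite_lattice_multiples:
  assumes L: "is_lattice L" and "w \<noteq> 0"
  shows "finite {r. 0 < r \<and> r \<le> c \<and> r *\<^sub>R w \<in> L}" (is "finite ?R")
proof -
  have "(\<lambda>r. r *\<^sub>R w) ` ?R \<subseteq> L \<inter> cball 0 (c * norm w)"
    by (auto simp: mult_right_mono)
  then have "finite ((\<lambda>r. r *\<^sub>R w) ` ?R)"
    using finite_lattice_Int_bounded[OF L bounded_cball] finite_subset by blast
  moreover have "inj_on (\<lambda>r. r *\<^sub>R w) ?R" using \<open>w \<noteq> 0\<close> by (auto intro: inj_onI)
  ultimately show ?thesis using finite_imageD by blast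
qed

text \<open>The generator is the shortest positive lattice multiple of \<open>b - a\<close>.\<close>
lemma lattice_generator_exists:
  assumes L: "is_lattice L" and g: "g \<in> L" "g \<noteq> 0" and c: "0 < c" "g = c *\<^sub>R (b - a)"
  shows "\<exists>v. lattice_generator L a b v"
proof -
  define w where "w = b - a"
  have "w \<noteq> 0" using g c by (auto simp: w_def)
  define R where "R = {r. 0 < r \<and> r \<le> c \<and> r *\<^sub>R w \<in> L}"
  have "c \<in> R" using c g by (simp add: R_def w_def)
  have "finite R" unfolding R_def using finite_lattice_multiples[OF L \<open>w \<noteq> 0\<close>] .
  define r0 where "r0 = Min R"
  have "r0 \<in> R" using \<open>finite R\<close> \<open>c \<in> R\<close> Min_in r0_def by auto
  have r0_min: "\<And>r. r \<in> R \<Longrightarrow> r0 \<le> r" using \<open>finite R\<close> by (simp add: r0_def)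
  have "0 < r0" using \<open>r0 \<in> R\<close> by (simp add: R_def)
  define v where "v = r0 *\<^sub>R w"
  have "v \<in> L" using \<open>r0 \<in> R\<close> by (simp add: R_def v_def)
  have "x \<in> range (\<lambda>k::int. of_int k *\<^sub>R v)" if x: "x \<in> L" "x \<in> span {w}" for x
  proof -
    obtain r where r: "x = r *\<^sub>R w" using x(2) by (auto simp: span_singleton)
    define k where "k = \<lfloor>r / r0\<rfloor>"
    have k: "of_int k * r0 \<le> r" "r < of_int k * r0 + r0"
      using \<open>0 < r0\<close> unfolding k_def
      by (metis floor_divide_lower, metis floor_divide_upper distrib_right mult_1 add.commute)
    have "x - of_int k *\<^sub>R v \<in> L"
      using lattice_diff[OF L x(1) lattice_of_int_scaleR[OF L \<open>v \<in> L\<close>]] .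
    then have "(r - of_int k * r0) *\<^sub>R w \<in> L" by (simp add: r v_def algebra_simps)
    then have "r - of_int k * r0 = 0"
    proof (rule contrapos_pp)
      assume "r - of_int k * r0 \<noteq> 0"
      moreover have "r - of_int k * r0 \<le> c" using k \<open>r0 \<in> R\<close> by (simp add: R_def)
      ultimately have "r - of_int k * r0 \<in> R" using k \<open>(r - of_int k * r0) *\<^sub>R w \<in> L\<close>
        by (simp add: R_def)
      then show "(r - of_int k * r0) *\<^sub>R w \<notin> L" using r0_min k(2) by fastforce
    qed
    then have "x = of_int k *\<^sub>R v" by (simp add: r v_def)
    then show ?thesis by blast
  qed
  then have "L \<inter> span {b - a} = range (\<lambda>k::int. of_int k *\<^sub>R v)"
    using lattice_of_int_scaleR[OF L \<open>v \<in> L\<close>] by (auto simp: span_singleton v_def w_def)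
  then have "lattice_generator L a b v"
    unfolding lattice_generator_def using \<open>v \<in> L\<close> \<open>0 < r0\<close> \<open>w \<noteq> 0\<close> by (auto simp: v_def w_def)
  then show ?thesis by blast
qed

lemma lattice_lengths_witness:
  assumes "l \<in> lattice_lengths L C"
  obtains x y w where "x \<in> C" "y \<in> C" "w \<in> L" "w \<noteq> 0" "0 < l" "y - x = l *\<^sub>R w"
proof -
  obtain x y v t where xy: "x \<in> C" "y \<in> C" "x \<noteq> y" and v: "v \<in> L" "v \<noteq> 0"
    and t: "0 < t" "v = t *\<^sub>R (y - x)" and l: "l = norm (y - x) / norm v"
    using assms unfolding lattice_lengths_def lattice_generator_def by blast
  have "l = 1 / t" using xy(3) t by (simp add: l)
  then show ?thesis using that[OF xy(1,2) v] t by simp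
qed

lemma lattice_lengths_ge:
  assumes L: "is_lattice L" and xy: "x \<in> C" "y \<in> C" and g: "g \<in> L" "g \<noteq> 0"
    and c: "0 < c" "y - x = c *\<^sub>R g"
  shows "\<exists>l\<in>lattice_lengths L C. c \<le> l"
proof -
  have "x \<noteq> y" using g c by auto
  have g_eq: "g = (1 / c) *\<^sub>R (y - x)" using c by simp
  moreover have "0 < 1 / c" using c by simp
  ultimately obtain v where gen: "lattice_generator L x y v"
    using lattice_generator_exists[OF L g] by blast
  then obtain t where t: "0 < t" "v = t *\<^sub>R (y - x)" by (auto simp: lattice_generator_def)
  have "g \<in> L \<inter> span {y - x}" using g g_eq by (auto simp: span_singleton)
  then obtain k :: int where "g = of_int k *\<^sub>R v" using gen unfolding lattice_generator_def by blast
  then have "1 *\<^sub>R g = (of_int k * (t * c)) *\<^sub>R g" using t c by simp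
  then have kt: "of_int k * (t * c) = 1" using g(2) by (simp only: scaleR_cancel_right) simp
  have "0 < t * c" using t c by simp
  then have "0 < real_of_int k" using kt zero_less_mult_pos2[of "real_of_int k" "t * c"] by simp
  then have "1 * (t * c) \<le> of_int k * (t * c)" using \<open>0 < t * c\<close>
    by (intro mult_right_mono) auto
  then have "t * c \<le> 1" using kt by simp
  then have "c \<le> 1 / t" using t by (simp add: field_simps)
  moreover have "norm (y - x) / norm v = 1 / t" using t \<open>x \<noteq> y\<close> by simp
  moreover have "norm (y - x) / norm v \<in> lattice_lengths L C"
    unfolding lattice_lengths_def using xy \<open>x \<noteq> y\<close> gen by blast
  ultimately show ?thesis by auto
qed

lemma bdd_above_lattice_lengths:
  assumes L: "is_lattice L" and C: "bounded C"
  shows "bdd_above (lattice_lengths L C)"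
proof -
  obtain e where "0 < e" and e: "\<And>w. w \<in> L \<Longrightarrow> w \<noteq> 0 \<Longrightarrow> e \<le> norm w"
    using L by (auto simp: is_lattice_def)
  obtain B where B: "\<And>x. x \<in> C \<Longrightarrow> norm x \<le> B" using C bounded_iff by blast
  have "l \<le> 2 * B / e" if l: "l \<in> lattice_lengths L C" for l
  proof -
    obtain x y w where "x \<in> C" "y \<in> C" "w \<in> L" "w \<noteq> 0" "0 < l" "y - x = l *\<^sub>R w"
      by (rule lattice_lengths_witness[OF l])
    then have "l * e \<le> norm (y - x)" using e[of w] by (simp add: mult_left_mono)
    also have "\<dots> \<le> 2 * B" using B[of x] B[of y] \<open>x \<in> C\<close> \<open>y \<in> C\<close> norm_triangle_ineq4[of y x] by linarith
    finally show ?thesis using \<open>0 < e\<close> by (simp add: pos_le_divide_eq)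
  qed
  then show ?thesis by (rule bdd_aboveI)
qed

lemma lattice_lengths_nonempty:
  assumes L: "is_lattice L" and C: "convex_body C"
  shows "lattice_lengths L C \<noteq> {}"
proof -
  obtain x r where "0 < r" "ball x r \<subseteq> C"
    using C by (auto simp: convex_body_def mem_interior)
  obtain g where g: "g \<in> L" "g \<noteq> 0" using lattice_nonzero_exists[OF L] .
  define c where "c = r / (2 * norm g)"
  have "0 < c" using \<open>0 < r\<close> g by (simp add: c_def)
  have "x \<in> C" "x + c *\<^sub>R g \<in> C"
    using \<open>ball x r \<subseteq> C\<close> \<open>0 < r\<close> g by (auto simp: c_def dist_norm)
  moreover have "(x + c *\<^sub>R g) - x = c *\<^sub>R g" by simp
  ultimately show ?thesis using lattice_lengths_ge[OF L _ _ g \<open>0 < c\<close>] by blast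
qed

lemma lattice_diameter_ge:
  assumes "is_lattice L" "bounded C" "x \<in> C" "y \<in> C" "g \<in> L" "g \<noteq> 0" "0 < c" "y - x = c *\<^sub>R g"
  shows "c \<le> lattice_diameter L C"
  using lattice_lengths_ge[OF assms(1,3-)] cSup_upper[OF _ bdd_above_lattice_lengths[OF assms(1,2)]]
  unfolding lattice_diameter_def by force

lemma lattice_diameter_pos:
  assumes L: "is_lattice L" and C: "convex_body C"
  shows "0 < lattice_diameter L C"
proof -
  obtain l where l: "l \<in> lattice_lengths L C" using lattice_lengths_nonempty[OF L C] by blast
  have "bounded C" using C by (simp add: convex_body_def compact_imp_bounded)
  then have "l \<le> lattice_diameter L C"
    unfolding lattice_diameter_def using l bdd_above_lattice_lengths[OF L] by (simp add: cSup_upper)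
  moreover have "0 < l" using lattice_lengths_witness[OF l] by blast
  ultimately show ?thesis by simp
qed

lemma lattice_diameter_mono:
  assumes L: "is_lattice L" and "convex_body C" "C \<subseteq> K" "bounded K"
  shows "lattice_diameter L C \<le> lattice_diameter L K"
  unfolding lattice_diameter_def
proof (rule cSup_subset_mono)
  show "lattice_lengths L C \<noteq> {}" using lattice_lengths_nonempty[OF L assms(2)] .
  show "bdd_above (lattice_lengths L K)" using bdd_above_lattice_lengths[OF L assms(4)] .
  show "lattice_lengths L C \<subseteq> lattice_lengths L K"
    using assms(3) unfolding lattice_lengths_def by blast
qed

lemma lattice_complete_longer_segment:
  assumes L: "is_lattice L" and complete: "lattice_complete L C"
    and K: "convex_body K" "C \<subset> K"
  obtains x y w l where "x \<in> K" "y \<in> K" "w \<in> L" "w \<noteq> 0"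
    "lattice_diameter L C < l" "y - x = l *\<^sub>R w"
proof -
  have "bounded K" using K by (simp add: convex_body_def compact_imp_bounded)
  have "convex_body C" using complete by (simp add: lattice_complete_def)
  then have "lattice_diameter L C \<le> lattice_diameter L K"
    using lattice_diameter_mono[OF L _ _ \<open>bounded K\<close>] K(2) by blast
  moreover have "lattice_diameter L K \<noteq> lattice_diameter L C"
    using complete K unfolding lattice_complete_def by blast
  ultimately have "lattice_diameter L C < Sup (lattice_lengths L K)"
    by (simp add: lattice_diameter_def)
  then obtain l where l: "l \<in> lattice_lengths L K" "lattice_diameter L C < l"
    using less_cSup_iff[OF lattice_lengths_nonempty[OF L K(1)] bdd_above_lattice_lengths[OF L \<open>bounded K\<close>]]
    by blast
  obtain x y w where "x \<in> K" "y \<in> K" "w \<in> L" "w \<noteq> 0" "y - x = l *\<^sub>R w"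
    using lattice_lengths_witness[OF l(1)] by blast
  then show ?thesis using that l(2) by blast
qed

section \<open>Widths and a criterion for reducedness\<close>

lemma bdd_above_inner_diffs:
  assumes "bounded C"
  shows "bdd_above {y \<bullet> (a - b) | a b. a \<in> C \<and> b \<in> C}"
proof -
  obtain B where B: "\<And>x. x \<in> C \<Longrightarrow> norm x \<le> B" using assms bounded_iff by blast
  have "y \<bullet> (a - b) \<le> norm y * (2 * B)" if "a \<in> C" "b \<in> C" for a b
  proof -
    have "norm (a - b) \<le> 2 * B" using B[of a] B[of b] that norm_triangle_ineq4[of a b] by linarith
    then show ?thesis
      using norm_cauchy_schwarz[of y "a - b"] mult_left_mono[of _ _ "norm y"] by force
  qed
  then show ?thesis by (intro bdd_aboveI[where M = "norm y * (2 * B)"]) auto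
qed

lemma inner_diff_le_dir_width:
  "bounded C \<Longrightarrow> a \<in> C \<Longrightarrow> b \<in> C \<Longrightarrow> y \<bullet> (a - b) \<le> dir_width y C"
  unfolding dir_width_def by (rule cSup_upper) (auto intro: bdd_above_inner_diffs)

lemma dir_width_le:
  assumes "C \<noteq> {}" and bounds: "\<And>x. x \<in> C \<Longrightarrow> lo \<le> y \<bullet> x \<and> y \<bullet> x \<le> hi"
  shows "dir_width y C \<le> hi - lo"
  unfolding dir_width_def
proof (rule cSup_least)
  show "{y \<bullet> (a - b) | a b. a \<in> C \<and> b \<in> C} \<noteq> {}" using assms(1) by blast
  fix s assume "s \<in> {y \<bullet> (a - b) | a b. a \<in> C \<and> b \<in> C}"
  then obtain a b where "a \<in> C" "b \<in> C" "s = y \<bullet> (a - b)" by blast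
  then show "s \<le> hi - lo" using bounds[of a] bounds[of b] by (simp add: inner_diff_right)
qed

lemma dir_width_attained:
  assumes "compact C" "C \<noteq> {}"
  obtains a b where "a \<in> C" "b \<in> C" "dir_width y C = y \<bullet> (a - b)"
proof -
  let ?f = "\<lambda>p. y \<bullet> (fst p - snd p)"
  have S: "{y \<bullet> (a - b) | a b. a \<in> C \<and> b \<in> C} = ?f ` (C \<times> C)" by force
  have "compact (?f ` (C \<times> C))"
    by (intro compact_continuous_image continuous_intros compact_Times assms)
  moreover have "?f ` (C \<times> C) \<noteq> {}" using assms by auto
  ultimately obtain s where s: "s \<in> ?f ` (C \<times> C)" "\<forall>t\<in>?f ` (C \<times> C). t \<le> s"
    using compact_attains_sup by blast
  then have "dir_width y C = s" unfolding dir_width_def S by (intro cSup_eq_maximum) auto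
  then show ?thesis using that s(1) by auto
qed

lemma dir_width_less_if_unique_max:
  assumes C: "compact C" "C \<noteq> {}" "C \<subseteq> T" and "bounded T" "p \<in> T" "p \<notin> C"
    and max: "\<And>x. x \<in> T \<Longrightarrow> x \<noteq> p \<Longrightarrow> y \<bullet> x < y \<bullet> p"
  shows "dir_width y C < dir_width y T"
proof -
  obtain a b where ab: "a \<in> C" "b \<in> C" "dir_width y C = y \<bullet> (a - b)"
    using dir_width_attained[OF C(1,2)] .
  have "y \<bullet> a < y \<bullet> p" using max ab C(3) \<open>p \<notin> C\<close> by blast
  then have "dir_width y C < y \<bullet> (p - b)" using ab(3) by (simp add: inner_diff_right)
  also have "\<dots> \<le> dir_width y T" using inner_diff_le_dir_width assms ab by blast
  finally show ?thesis .
qed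

lemma lattice_width_le_dir_width:
  assumes "y \<in> dual_lattice L" "y \<noteq> 0" "bounded C" "C \<noteq> {}"
  shows "lattice_width L C \<le> dir_width y C"
  unfolding lattice_width_def
proof (rule cInf_lower)
  obtain a where "a \<in> C" using assms(4) by blast
  then show "bdd_below {dir_width y C | y. y \<in> dual_lattice L \<and> y \<noteq> 0}"
    using inner_diff_le_dir_width[OF assms(3), of a a] by (intro bdd_belowI[of _ 0]) auto
qed (use assms in blast)

lemma lattice_width_ge:
  assumes "\<And>y. y \<in> dual_lattice L \<Longrightarrow> y \<noteq> 0 \<Longrightarrow> m \<le> dir_width y C"
    and "y0 \<in> dual_lattice L" "y0 \<noteq> 0"
  shows "m \<le> lattice_width L C"
  unfolding lattice_width_def using assms by (intro cInf_greatest) auto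

lemma dual_lattice_uminus: "y \<in> dual_lattice L \<Longrightarrow> - y \<in> dual_lattice L"
  by (simp add: dual_lattice_def)

definition width_exposes :: "pt set \<Rightarrow> pt set \<Rightarrow> pt \<Rightarrow> pt \<Rightarrow> bool" where
  "width_exposes L T y p \<longleftrightarrow> y \<in> dual_lattice L \<and> y \<noteq> 0 \<and>
     dir_width y T \<le> lattice_width L T \<and> (\<forall>x\<in>T. x \<noteq> p \<longrightarrow> y \<bullet> x < y \<bullet> p)"

lemma lattice_reducedI:
  assumes T: "convex_body T" "T = convex hull S"
    and exposed: "\<And>p. p \<in> S \<Longrightarrow> \<exists>y. width_exposes L T y p"
  shows "lattice_reduced L T"
  unfolding lattice_reduced_def
proof (intro conjI T(1) notI)
  assume "\<exists>C. convex_body C \<and> C \<subset> T \<and> lattice_width L C = lattice_width L T"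
  then obtain C where C: "convex_body C" "C \<subset> T" "lattice_width L C = lattice_width L T" by blast
  then have "compact C" "C \<noteq> {}" using interior_subset by (auto simp: convex_body_def)
  have "\<not> S \<subseteq> C"
  proof
    assume "S \<subseteq> C"
    then have "T \<subseteq> C"
      using hull_minimal[OF \<open>S \<subseteq> C\<close>, of convex] C(1) T(2) by (simp add: convex_body_def)
    then show False using C(2) by blast
  qed
  then obtain p where "p \<in> S" "p \<notin> C" by blast
  then obtain y where y: "width_exposes L T y p" using exposed by blast
  have "bounded T" using T(1) by (simp add: convex_body_def compact_imp_bounded)
  have "p \<in> T" using \<open>p \<in> S\<close> T(2) by (simp add: hull_inc)
  have "lattice_width L C \<le> dir_width y C"
    using y \<open>compact C\<close> \<open>C \<noteq> {}\<close>
    by (intro lattice_width_le_dir_width) (auto simp: width_exposes_def compact_imp_bounded)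
  also have "\<dots> < dir_width y T"
    using y C(2) \<open>p \<notin> C\<close> \<open>p \<in> T\<close> \<open>bounded T\<close> \<open>compact C\<close> \<open>C \<noteq> {}\<close>
    by (intro dir_width_less_if_unique_max) (auto simp: width_exposes_def)
  also have "\<dots> \<le> lattice_width L T" using y by (simp add: width_exposes_def)
  finally show False using C(3) by simp
qed

section \<open>Coordinates in the plane\<close>

lemma inner_real2: "(x::pt) \<bullet> y = x$1 * y$1 + x$2 * y$2"
  by (simp add: inner_vec_def sum_2)

definition det2 :: "pt \<Rightarrow> pt \<Rightarrow> real" where
  "det2 u v = u$1 * v$2 - u$2 * v$1"

lemma det2_scaleR_add:
  "det2 (x *\<^sub>R u + y *\<^sub>R v) (z *\<^sub>R u + w *\<^sub>R v) = (x * w - y * z) * det2 u v"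
  by (simp add: det2_def algebra_simps)

lemma scaleR_add_eq_0_if_det2_ne_0:
  assumes "det2 u v \<noteq> 0" "x *\<^sub>R u + y *\<^sub>R v = 0"
  shows "x = 0" "y = 0"
proof -
  have "det2 (x *\<^sub>R u + y *\<^sub>R v) v = x * det2 u v" "det2 u (x *\<^sub>R u + y *\<^sub>R v) = y * det2 u v"
    by (simp_all add: det2_def algebra_simps)
  then show "x = 0" "y = 0" using assms by (simp_all add: det2_def)
qed

lemma det2_ne_0_if_not_collinear:
  assumes "\<not> collinear {a, b, c}"
  shows "det2 (b - a) (c - a) \<noteq> 0"
proof
  assume det: "det2 (b - a) (c - a) = 0"
  define u where "u = b - a"
  define v where "v = c - a"
  have uv: "u$1 * v$2 = u$2 * v$1" using det by (simp add: det2_def u_def v_def)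
  have "collinear {0, u, v}"
  proof (cases "u$1 = 0")
    case True
    show ?thesis
    proof (cases "u$2 = 0")
      case False
      then have "v = (v$2 / u$2) *\<^sub>R u" using True uv by (simp add: vec_eq_iff forall_2)
      then show ?thesis by (metis collinear_lemma)
    qed (use True in \<open>simp add: collinear_lemma vec_eq_iff forall_2\<close>)
  next
    case False
    then have "v = (v$1 / u$1) *\<^sub>R u" using uv by (simp add: vec_eq_iff forall_2 field_simps)
    then show ?thesis by (metis collinear_lemma)
  qed
  then have "collinear {b, a, c}" using collinear_3[of b a c] by (simp add: u_def v_def)
  then show False using assms by (simp add: insert_commute)
qed

lemma biorthogonal_exists:
  assumes "det2 u v \<noteq> 0"
  obtains n1 n2 where "n1 \<bullet> u = 1" "n1 \<bullet> v = 0" "n2 \<bullet> u = 0" "n2 \<bullet> v = 1"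
    "\<And>x. x = (n1 \<bullet> x) *\<^sub>R u + (n2 \<bullet> x) *\<^sub>R v"
proof
  define D where "D = det2 u v"
  define n1 :: pt where "n1 = (1 / D) *\<^sub>R vector [v$2, - v$1]"
  define n2 :: pt where "n2 = (1 / D) *\<^sub>R vector [- u$2, u$1]"
  have "D \<noteq> 0" using assms by (simp add: D_def)
  have "vector [v$2, - v$1] \<bullet> u = D" "vector [v$2, - v$1] \<bullet> v = 0"
    "vector [- u$2, u$1] \<bullet> u = 0" "vector [- u$2, u$1] \<bullet> v = D"
    by (simp_all add: D_def inner_real2 det2_def algebra_simps)
  then show "n1 \<bullet> u = 1" "n1 \<bullet> v = 0" "n2 \<bullet> u = 0" "n2 \<bullet> v = 1"
    using \<open>D \<noteq> 0\<close> by (simp_all add: n1_def n2_def)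
  show "x = (n1 \<bullet> x) *\<^sub>R u + (n2 \<bullet> x) *\<^sub>R v" for x
  proof -
    have "(vector [v$2, - v$1] \<bullet> x) *\<^sub>R u + (vector [- u$2, u$1] \<bullet> x) *\<^sub>R v = D *\<^sub>R x"
      unfolding vec_eq_iff forall_2 by (simp add: D_def inner_real2 det2_def algebra_simps)
    then have "x = (1 / D) *\<^sub>R ((vector [v$2, - v$1] \<bullet> x) *\<^sub>R u + (vector [- u$2, u$1] \<bullet> x) *\<^sub>R v)"
      using \<open>D \<noteq> 0\<close> by simp
    then show ?thesis by (simp add: n1_def n2_def scaleR_add_right)
  qed
qed

lemma triangle_point:
  "0 \<le> s \<Longrightarrow> 0 \<le> t \<Longrightarrow> s + t \<le> 1 \<Longrightarrow> a + s *\<^sub>R (b - a) + t *\<^sub>R (c - a) \<in> convex hull {a, b, c}"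
  unfolding convex_hull_3_alt by blast

lemma convex_body_triangle:
  assumes "\<not> collinear {a, b, c}"
  shows "convex_body (convex hull {a, b, c})"
proof -
  have "DIM(pt) = 2" by simp
  have "(1/3) *\<^sub>R a + (1/3) *\<^sub>R b + (1/3) *\<^sub>R c \<in> interior (convex hull {a, b, c})"
    unfolding interior_convex_hull_3_minimal[OF assms \<open>DIM(pt) = 2\<close>]
    by (intro CollectI exI[of _ "1/3"]) simp
  then show ?thesis
    by (auto simp: convex_body_def compact_convex_hull finite_imp_compact)
qed

lemma inner_convex_hull_bounds:
  assumes "\<And>z. z \<in> S \<Longrightarrow> lo \<le> f \<bullet> z \<and> f \<bullet> z \<le> hi" "x \<in> convex hull S"
  shows "lo \<le> f \<bullet> x \<and> f \<bullet> x \<le> hi"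
proof -
  have "convex hull S \<subseteq> {z. f \<bullet> z \<le> hi} \<inter> {z. lo \<le> f \<bullet> z}"
    using assms(1) by (intro hull_minimal convex_Int convex_halfspace_le convex_halfspace_ge) auto
  then show ?thesis using assms(2) by auto
qed

lemma abs_inner_diff_convex_hull_le:
  assumes "\<And>z. z \<in> S \<Longrightarrow> lo \<le> f \<bullet> z \<and> f \<bullet> z \<le> hi" "x \<in> convex hull S" "y \<in> convex hull S"
  shows "\<bar>f \<bullet> (y - x)\<bar> \<le> hi - lo"
  using inner_convex_hull_bounds[OF assms(1,2)] inner_convex_hull_bounds[OF assms(1,3)]
  by (simp add: inner_diff_right abs_le_iff)

lemma inner_eq_0_if_det2_ne_0:
  assumes "det2 u v \<noteq> 0" "u \<bullet> y = 0" "v \<bullet> y = 0"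
  shows "y = 0"
proof -
  obtain n1 n2 where "\<And>x. x = (n1 \<bullet> x) *\<^sub>R u + (n2 \<bullet> x) *\<^sub>R v"
    using biorthogonal_exists[OF assms(1)] by metis
  then have "y \<bullet> y = (n1 \<bullet> y) * (u \<bullet> y) + (n2 \<bullet> y) * (v \<bullet> y)"
    by (metis inner_add_left inner_scaleR_left)
  then show ?thesis using assms(2,3) by simp
qed

lemma quadrilateral_coordinate_bounds:
  fixes a b c n1 n2 :: pt and \<epsilon> :: real
  defines "p \<equiv> a + ((1 + \<epsilon>) / 2) *\<^sub>R ((b - a) + (c - a))"
  assumes frame: "n1 \<bullet> (b - a) = 1" "n1 \<bullet> (c - a) = 0" "n2 \<bullet> (b - a) = 0" "n2 \<bullet> (c - a) = 1"
    and \<epsilon>: "0 < \<epsilon>" "\<epsilon> < 1"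
    and xy: "x \<in> convex hull {a, b, c, p}" "y \<in> convex hull {a, b, c, p}"
  shows "\<bar>n1 \<bullet> (y - x)\<bar> \<le> 1" "\<bar>n2 \<bullet> (y - x)\<bar> \<le> 1"
    "\<bar>(1 + \<epsilon>) * (n1 \<bullet> (y - x)) + (1 - \<epsilon>) * (n2 \<bullet> (y - x))\<bar> \<le> 1 + \<epsilon>"
    "\<bar>(1 - \<epsilon>) * (n1 \<bullet> (y - x)) + (1 + \<epsilon>) * (n2 \<bullet> (y - x))\<bar> \<le> 1 + \<epsilon>"
proof -
  have bound: "\<bar>f \<bullet> (y - x)\<bar> \<le> w"
    if f: "0 \<le> f \<bullet> (b - a)" "f \<bullet> (b - a) \<le> w" "0 \<le> f \<bullet> (c - a)" "f \<bullet> (c - a) \<le> w"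
      "((1 + \<epsilon>) / 2) * (f \<bullet> (b - a) + f \<bullet> (c - a)) \<le> w" for f w
  proof -
    have "f \<bullet> (p - a) = ((1 + \<epsilon>) / 2) * (f \<bullet> (b - a) + f \<bullet> (c - a))"
      by (simp only: p_def add_diff_cancel_left' inner_add_right inner_scaleR_right)
    moreover have "0 \<le> ((1 + \<epsilon>) / 2) * (f \<bullet> (b - a) + f \<bullet> (c - a))" using f \<epsilon> by simp
    ultimately have "f \<bullet> a \<le> f \<bullet> z \<and> f \<bullet> z \<le> f \<bullet> a + w" if "z \<in> {a, b, c, p}" for z
      using that f by (auto simp: inner_diff_right)
    from abs_inner_diff_convex_hull_le[OF this xy] show ?thesis by simp
  qed
  show "\<bar>n1 \<bullet> (y - x)\<bar> \<le> 1" "\<bar>n2 \<bullet> (y - x)\<bar> \<le> 1"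
    using bound[of n1 1] bound[of n2 1] frame \<epsilon> by simp_all
  show "\<bar>(1 + \<epsilon>) * (n1 \<bullet> (y - x)) + (1 - \<epsilon>) * (n2 \<bullet> (y - x))\<bar> \<le> 1 + \<epsilon>"
    using bound[of "(1 + \<epsilon>) *\<^sub>R n1 + (1 - \<epsilon>) *\<^sub>R n2" "1 + \<epsilon>"] frame \<epsilon>
    by (simp add: inner_add_left)
  show "\<bar>(1 - \<epsilon>) * (n1 \<bullet> (y - x)) + (1 + \<epsilon>) * (n2 \<bullet> (y - x))\<bar> \<le> 1 + \<epsilon>"
    using bound[of "(1 - \<epsilon>) *\<^sub>R n1 + (1 + \<epsilon>) *\<^sub>R n2" "1 + \<epsilon>"] frame \<epsilon>
    by (simp add: inner_add_left)
qed

section \<open>Complete triangles are reduced\<close>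

locale lattice_triangle =
  fixes L :: "pt set" and a b c :: pt
  assumes lattice: "is_lattice L" and not_collinear: "\<not> collinear {a, b, c}"
begin

abbreviation T where "T \<equiv> convex hull {a, b, c}"

abbreviation d where "d \<equiv> lattice_diameter L T"

lemma convex_body: "convex_body T"
  using convex_body_triangle[OF not_collinear] .

lemma diameter_pos: "0 < d"
  using lattice_diameter_pos[OF lattice convex_body] .

lemma det2_edges: "det2 (b - a) (c - a) \<noteq> 0"
  using det2_ne_0_if_not_collinear[OF not_collinear] .

lemma difference_vector:
  assumes "\<bar>\<sigma>\<bar> \<le> 1" "\<bar>\<tau>\<bar> \<le> 1" "\<bar>\<sigma> + \<tau>\<bar> \<le> 1"
  shows "\<exists>x\<in>T. \<exists>y\<in>T. y - x = \<sigma> *\<^sub>R (b - a) + \<tau> *\<^sub>R (c - a)"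
proof -
  define x where "x = a + max (- \<sigma>) 0 *\<^sub>R (b - a) + max (- \<tau>) 0 *\<^sub>R (c - a)"
  define y where "y = a + max \<sigma> 0 *\<^sub>R (b - a) + max \<tau> 0 *\<^sub>R (c - a)"
  have "x \<in> T" "y \<in> T" unfolding x_def y_def
    using assms by (intro triangle_point; simp add: max_def abs_le_iff)+
  moreover have "y - x = \<sigma> *\<^sub>R (b - a) + \<tau> *\<^sub>R (c - a)"
    by (simp add: x_def y_def max_def algebra_simps)
  ultimately show ?thesis by blast
qed

text \<open>The open hexagon is the interior of the difference body \<open>T - T\<close>: a nonzero lattice
  vector \<open>g\<close> with \<open>d g\<close> inside it would give a segment in \<open>T\<close> of lattice length above \<open>d\<close>.\<close>
lemma lattice_vector_eq_0_if_in_open_hexagon: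
  assumes g: "g \<in> L" "d *\<^sub>R g = \<sigma> *\<^sub>R (b - a) + \<tau> *\<^sub>R (c - a)"
    and hex: "\<bar>\<sigma>\<bar> < 1" "\<bar>\<tau>\<bar> < 1" "\<bar>\<sigma> + \<tau>\<bar> < 1"
  shows "g = 0"
proof (rule ccontr)
  assume "g \<noteq> 0"
  define m where "m = max \<bar>\<sigma>\<bar> (max \<bar>\<tau>\<bar> \<bar>\<sigma> + \<tau>\<bar>)"
  define k where "k = 2 / (1 + m)"
  have "0 \<le> m" "m < 1" using hex by (auto simp: m_def)
  then have "1 < k" "k * m \<le> 1" by (auto simp: k_def field_simps)
  have scaled: "\<bar>k * z\<bar> \<le> 1" if "\<bar>z\<bar> \<le> m" for z
  proof -
    have "\<bar>k * z\<bar> \<le> k * m" using that \<open>1 < k\<close> by (simp add: abs_mult mult_left_mono)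
    then show ?thesis using \<open>k * m \<le> 1\<close> by linarith
  qed
  have "\<bar>\<sigma>\<bar> \<le> m" "\<bar>\<tau>\<bar> \<le> m" "\<bar>\<sigma> + \<tau>\<bar> \<le> m" by (simp_all add: m_def)
  then have "\<bar>k * \<sigma>\<bar> \<le> 1" "\<bar>k * \<tau>\<bar> \<le> 1" "\<bar>k * \<sigma> + k * \<tau>\<bar> \<le> 1"
    using scaled by (simp_all add: distrib_left[symmetric])
  then obtain x y where "x \<in> T" "y \<in> T" "y - x = (k * \<sigma>) *\<^sub>R (b - a) + (k * \<tau>) *\<^sub>R (c - a)"
    using difference_vector by blast
  moreover have "\<dots> = (k * d) *\<^sub>R g"
  proof -
    have "(k * d) *\<^sub>R g = k *\<^sub>R (\<sigma> *\<^sub>R (b - a) + \<tau> *\<^sub>R (c - a))" by (simp add: g(2)[symmetric])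
    then show ?thesis by (simp add: scaleR_add_right)
  qed
  ultimately have "k * d \<le> d"
    using lattice_diameter_ge[OF lattice _ _ _ g(1) \<open>g \<noteq> 0\<close>] convex_body diameter_pos \<open>1 < k\<close>
    by (simp add: convex_body_def compact_imp_bounded)
  then show False using diameter_pos \<open>1 < k\<close> by simp
qed


lemma enlarged_triangle:
  fixes \<epsilon> :: real
  defines "K \<equiv> convex hull {a, b, c, a + ((1 + \<epsilon>) / 2) *\<^sub>R ((b - a) + (c - a))}"
  assumes "0 < \<epsilon>"
  shows "convex_body K" "T \<subset> K"
proof -
  define p where "p = a + ((1 + \<epsilon>) / 2) *\<^sub>R ((b - a) + (c - a))"
  obtain n1 n2 where frame: "n1 \<bullet> (b - a) = 1" "n1 \<bullet> (c - a) = 0" "n2 \<bullet> (b - a) = 0" "n2 \<bullet> (c - a) = 1"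
    using biorthogonal_exists[OF det2_edges] by blast
  have "T \<subseteq> K" unfolding K_def by (rule hull_mono) blast
  have "p \<notin> T"
  proof
    assume "p \<in> T"
    have "(n1 + n2) \<bullet> a \<le> (n1 + n2) \<bullet> z \<and> (n1 + n2) \<bullet> z \<le> (n1 + n2) \<bullet> a + 1" if "z \<in> {a, b, c}" for z
      using that frame by (auto simp: inner_add_left inner_diff_right)
    from inner_convex_hull_bounds[OF this \<open>p \<in> T\<close>] have "(n1 + n2) \<bullet> (p - a) \<le> 1"
      by (simp add: inner_diff_right)
    moreover have "(n1 + n2) \<bullet> (p - a) = 1 + \<epsilon>"
      unfolding p_def add_diff_cancel_left' inner_scaleR_right inner_add_left inner_add_right frame
      by simp
    ultimately show False using \<open>0 < \<epsilon>\<close> by simp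
  qed
  then show "T \<subset> K" using \<open>T \<subseteq> K\<close> by (auto simp: K_def p_def hull_inc)
  show "convex_body K"
    using convex_body interior_mono[OF \<open>T \<subseteq> K\<close>]
    by (auto simp: convex_body_def K_def compact_convex_hull finite_imp_compact)
qed

text \<open>Completeness of \<open>T\<close> yields a lattice segment in the enlarged triangle longer than \<open>d\<close>.
  Its direction \<open>w\<close> puts \<open>d w\<close> strictly inside the difference body of the enlarged triangle,
  but by the hexagon lemma not inside the open hexagon.\<close>
lemma near_cevian:
  assumes complete: "lattice_complete L T" and \<epsilon>: "0 < \<epsilon>" "\<epsilon> < 1"
  obtains g s r where "g \<in> L" "d *\<^sub>R g = s *\<^sub>R (b - a) + r *\<^sub>R (c - a)"
    "\<bar>s\<bar> < 1" "\<bar>r\<bar> < 1" "1 \<le> s + r"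
    "(1 + \<epsilon>) * s + (1 - \<epsilon>) * r < 1 + \<epsilon>" "(1 - \<epsilon>) * s + (1 + \<epsilon>) * r < 1 + \<epsilon>"
proof -
  obtain n1 n2 where frame: "n1 \<bullet> (b - a) = 1" "n1 \<bullet> (c - a) = 0" "n2 \<bullet> (b - a) = 0" "n2 \<bullet> (c - a) = 1"
    and coords: "\<And>x. x = (n1 \<bullet> x) *\<^sub>R (b - a) + (n2 \<bullet> x) *\<^sub>R (c - a)"
    using biorthogonal_exists[OF det2_edges] by blast
  define p where "p = a + ((1 + \<epsilon>) / 2) *\<^sub>R ((b - a) + (c - a))"
  define K where "K = convex hull {a, b, c, p}"
  note K = enlarged_triangle[OF \<epsilon>(1), folded p_def K_def]
  obtain x y w l where xy: "x \<in> K" "y \<in> K" and w: "w \<in> L" "w \<noteq> 0" and "d < l" "y - x = l *\<^sub>R w"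
    using lattice_complete_longer_segment[OF lattice complete K] .
  define \<mu> where "\<mu> = d / l"
  have \<mu>: "0 < \<mu>" "\<mu> < 1" using diameter_pos \<open>d < l\<close> by (auto simp: \<mu>_def)
  have dw: "d *\<^sub>R w = \<mu> *\<^sub>R (y - x)" using \<open>d < l\<close> diameter_pos \<open>y - x = l *\<^sub>R w\<close> by (simp add: \<mu>_def)
  define s where "s = n1 \<bullet> (d *\<^sub>R w)"
  define r where "r = n2 \<bullet> (d *\<^sub>R w)"
  have sr: "s = \<mu> * (n1 \<bullet> (y - x))" "r = \<mu> * (n2 \<bullet> (y - x))" by (simp_all add: s_def r_def dw)
  have shrink: "\<bar>\<mu> * z\<bar> < B" if "\<bar>z\<bar> \<le> B" "0 < B" for z B
  proof -
    have "\<bar>\<mu> * z\<bar> \<le> \<mu> * B" using that \<mu> by (simp add: abs_mult mult_left_mono)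
    also have "\<dots> < B" using that \<mu> by simp
    finally show ?thesis .
  qed
  note bounds = quadrilateral_coordinate_bounds[OF frame \<epsilon>, of x y, folded p_def K_def, OF xy]
  have hex: "\<bar>s\<bar> < 1" "\<bar>r\<bar> < 1" "\<bar>(1 + \<epsilon>) * s + (1 - \<epsilon>) * r\<bar> < 1 + \<epsilon>"
    "\<bar>(1 - \<epsilon>) * s + (1 + \<epsilon>) * r\<bar> < 1 + \<epsilon>"
    using shrink[OF bounds(1)] shrink[OF bounds(2)] shrink[OF bounds(3)] shrink[OF bounds(4)] \<epsilon>
    by (simp_all add: sr algebra_simps)
  have dw_coords: "d *\<^sub>R w = s *\<^sub>R (b - a) + r *\<^sub>R (c - a)" unfolding s_def r_def by (rule coords)
  have "1 \<le> \<bar>s + r\<bar>"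
    using lattice_vector_eq_0_if_in_open_hexagon[OF w(1) dw_coords] hex w(2) by force
  then consider "1 \<le> s + r" | "1 \<le> (- s) + (- r)" by linarith
  then show ?thesis
  proof cases
    case 1
    then show ?thesis using that[OF w(1) dw_coords] hex by (simp add: abs_less_iff)
  next
    case 2
    have "d *\<^sub>R (- w) = (- s) *\<^sub>R (b - a) + (- r) *\<^sub>R (c - a)" using dw_coords by simp
    with lattice_uminus[OF lattice w(1)] show ?thesis
      using 2 hex by (intro that[of "- w" "- s" "- r"]) (auto simp: abs_less_iff)
  qed
qed

text \<open>Among the finitely many candidate lattice vectors, those with \<open>d g\<close> strictly beyond the
  line through \<open>b - a\<close> and \<open>c - a\<close> stay beyond it by a fixed margin, so for \<open>\<epsilon>\<close> small enough
  the vector provided by \<open>near_cevian\<close> lies exactly on that line.\<close>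
lemma cevian:
  assumes complete: "lattice_complete L T"
  obtains h \<alpha> where "h \<in> L" "0 < \<alpha>" "\<alpha> < 1" "d *\<^sub>R h = (1 - \<alpha>) *\<^sub>R (b - a) + \<alpha> *\<^sub>R (c - a)"
proof -
  obtain n1 n2 where frame: "n1 \<bullet> (b - a) = 1" "n1 \<bullet> (c - a) = 0" "n2 \<bullet> (b - a) = 0" "n2 \<bullet> (c - a) = 1"
    using biorthogonal_exists[OF det2_edges] by blast
  define F where "F = L \<inter> cball 0 ((norm (b - a) + norm (c - a)) / d)"
  define excess where "excess g = n1 \<bullet> (d *\<^sub>R g) + n2 \<bullet> (d *\<^sub>R g) - 1" for g
  have "finite (excess ` F)"
    unfolding F_def by (intro finite_imageI finite_lattice_Int_bounded[OF lattice bounded_cball])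
  then obtain \<delta> where "0 < \<delta>" and \<delta>: "\<forall>e\<in>excess ` F. e \<noteq> 0 \<longrightarrow> \<delta> \<le> dist 0 e"
    using finite_set_avoid[of "excess ` F" 0] by blast
  define \<epsilon> where "\<epsilon> = min (1/2) (\<delta> / 3)"
  have \<epsilon>: "0 < \<epsilon>" "\<epsilon> < 1" "3 * \<epsilon> \<le> \<delta>" using \<open>0 < \<delta>\<close> by (auto simp: \<epsilon>_def)
  obtain g s r where g: "g \<in> L" "d *\<^sub>R g = s *\<^sub>R (b - a) + r *\<^sub>R (c - a)"
    and sr: "\<bar>s\<bar> < 1" "\<bar>r\<bar> < 1" "1 \<le> s + r"
    and less: "(1 + \<epsilon>) * s + (1 - \<epsilon>) * r < 1 + \<epsilon>" "(1 - \<epsilon>) * s + (1 + \<epsilon>) * r < 1 + \<epsilon>"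
    using near_cevian[OF complete \<epsilon>(1,2)] .
  have "n1 \<bullet> (d *\<^sub>R g) = s" "n2 \<bullet> (d *\<^sub>R g) = r"
    unfolding g(2) by (simp_all add: inner_add_right frame)
  then have excess_g: "excess g = s + r - 1" by (simp add: excess_def)
  have "norm (d *\<^sub>R g) \<le> \<bar>s\<bar> * norm (b - a) + \<bar>r\<bar> * norm (c - a)"
    unfolding g(2) using norm_triangle_ineq[of "s *\<^sub>R (b - a)" "r *\<^sub>R (c - a)"] by simp
  also have "\<dots> \<le> norm (b - a) + norm (c - a)"
    using sr by (intro add_mono mult_left_le_one_le) auto
  finally have "d * norm g \<le> norm (b - a) + norm (c - a)" using diameter_pos by simp
  then have "g \<in> F" using g(1) diameter_pos by (simp add: F_def pos_le_divide_eq mult.commute)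
  have "s + r - 1 < \<epsilon> * (1 - s + r)" using less(1) by (simp add: algebra_simps)
  also have "\<dots> \<le> \<epsilon> * 3" using sr \<epsilon> by (intro mult_left_mono) auto
  finally have "excess g < \<delta>" using \<epsilon>(3) excess_g by simp
  have "s + r = 1"
  proof (rule ccontr)
    assume "s + r \<noteq> 1"
    then have "excess g \<noteq> 0" using excess_g by simp
    then have "\<delta> \<le> \<bar>excess g\<bar>" using \<delta> \<open>g \<in> F\<close> by (simp add: dist_real_def)
    then have "\<delta> \<le> excess g" using excess_g sr(3) by simp
    then show False using \<open>excess g < \<delta>\<close> by simp
  qed
  then have s: "s = 1 - r" and r: "r = 1 - s" by simp_all
  have "(1 + \<epsilon>) * s + (1 - \<epsilon>) * r = 1 + \<epsilon> - 2 * (\<epsilon> * r)"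
    unfolding s by (simp add: algebra_simps)
  then have "0 < \<epsilon> * r" using less(1) by linarith
  have "(1 - \<epsilon>) * s + (1 + \<epsilon>) * r = 1 + \<epsilon> - 2 * (\<epsilon> * s)"
    unfolding r by (simp add: algebra_simps)
  then have "0 < \<epsilon> * s" using less(2) by linarith
  then have "0 < r" "0 < s" using \<open>0 < \<epsilon> * r\<close> \<epsilon>(1) zero_less_mult_pos by blast+
  then show ?thesis using that[of g r] g s by simp
qed

lemma cevian_parameters_eq:
  assumes h: "ha \<in> L" "hb \<in> L" "hc \<in> L"
    and params: "0 < \<alpha>" "\<alpha> < 1" "0 < \<beta>" "\<beta> < 1" "0 < \<gamma>" "\<gamma> < 1"
    and ha: "d *\<^sub>R ha = (1 - \<alpha>) *\<^sub>R (b - a) + \<alpha> *\<^sub>R (c - a)"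
    and hb: "d *\<^sub>R hb = (1 - \<beta>) *\<^sub>R (c - b) + \<beta> *\<^sub>R (a - b)"
    and hc: "d *\<^sub>R hc = (1 - \<gamma>) *\<^sub>R (a - c) + \<gamma> *\<^sub>R (b - c)"
  shows "\<beta> = \<alpha>" "\<gamma> = \<alpha>"
proof -
  have sum: "d *\<^sub>R (ha + hb + hc) = (\<gamma> - \<alpha>) *\<^sub>R (b - a) + (\<alpha> - \<beta>) *\<^sub>R (c - a)"
    unfolding scaleR_add_right ha hb hc by (simp add: algebra_simps)
  have "ha + hb + hc = 0"
    using lattice_vector_eq_0_if_in_open_hexagon[OF _ sum] lattice_add[OF lattice] h params
    by (simp add: abs_less_iff)
  then have "(\<gamma> - \<alpha>) *\<^sub>R (b - a) + (\<alpha> - \<beta>) *\<^sub>R (c - a) = 0" using sum by simp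
  then have "\<gamma> - \<alpha> = 0" "\<alpha> - \<beta> = 0" by (rule scaleR_add_eq_0_if_det2_ne_0[OF det2_edges])+
  then show "\<beta> = \<alpha>" "\<gamma> = \<alpha>" by simp_all
qed

end

lemma int_pair_outside_open_hexagon:
  fixes m n :: int and \<alpha> :: real
  assumes \<alpha>: "0 < \<alpha>" "\<alpha> < 1" and "m \<noteq> 0 \<or> n \<noteq> 0"
  shows "1 \<le> \<bar>(1 - \<alpha>) * m - \<alpha> * n\<bar> \<or> 1 \<le> \<bar>m + (1 - \<alpha>) * n\<bar> \<or> 1 \<le> \<bar>\<alpha> * m + n\<bar>"
proof -
  consider "m = 0" | "1 \<le> m" "0 \<le> n" | "1 \<le> m" "n \<le> -1" | "m \<le> -1" "n \<le> 0" | "m \<le> -1" "1 \<le> n"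
    by linarith
  then show ?thesis
  proof cases
    case 1
    then show ?thesis using assms(3) by (simp add: abs_if; linarith)
  next
    case 2
    then have "0 \<le> (1 - \<alpha>) * n" using \<alpha> by simp
    then show ?thesis using 2 by (simp add: abs_if)
  next
    case 3
    then have "(1 - \<alpha>) * 1 \<le> (1 - \<alpha>) * m" "\<alpha> * 1 \<le> \<alpha> * (- n)"
      using \<alpha> by (intro mult_left_mono; simp)+
    then show ?thesis by (simp add: abs_if algebra_simps)
  next
    case 4
    then have "(1 - \<alpha>) * n \<le> 0" using \<alpha> by (simp add: mult_nonneg_nonpos)
    then show ?thesis using 4 by (simp add: abs_if)
  next
    case 5
    then have "(1 - \<alpha>) * 1 \<le> (1 - \<alpha>) * (- m)" "\<alpha> * 1 \<le> \<alpha> * n"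
      using \<alpha> by (intro mult_left_mono; simp)+
    then show ?thesis by (simp add: abs_if algebra_simps)
  qed
qed

text \<open>The configuration forced by completeness: \<open>d ha\<close> and \<open>d hb\<close> run from \<open>a\<close> and \<open>b\<close> to the
  points dividing the opposite edges in the same ratio \<open>\<alpha>\<close>.\<close>
locale cevian_basis = lattice_triangle +
  fixes \<alpha> :: real and ha hb :: pt
  assumes alpha: "0 < \<alpha>" "\<alpha> < 1" and cevian_vectors: "ha \<in> L" "hb \<in> L"
    and ha: "d *\<^sub>R ha = (1 - \<alpha>) *\<^sub>R (b - a) + \<alpha> *\<^sub>R (c - a)"
    and hb: "d *\<^sub>R hb = (1 - \<alpha>) *\<^sub>R (c - b) + \<alpha> *\<^sub>R (a - b)"
begin

lemma hb_frame: "d *\<^sub>R hb = (- 1) *\<^sub>R (b - a) + (1 - \<alpha>) *\<^sub>R (c - a)"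
  using hb by (simp add: algebra_simps)

lemma cevian_det_pos: "0 < 1 - \<alpha> + \<alpha>\<^sup>2"
  using alpha by (simp add: add_pos_nonneg)

lemma det2_cevian_vectors: "det2 ha hb \<noteq> 0"
proof -
  have "d * d * det2 ha hb = det2 (d *\<^sub>R ha) (d *\<^sub>R hb)" by (simp add: det2_def algebra_simps)
  also have "\<dots> = (1 - \<alpha> + \<alpha>\<^sup>2) * det2 (b - a) (c - a)"
    unfolding ha hb_frame det2_scaleR_add by (simp add: power2_eq_square algebra_simps)
  finally show ?thesis using cevian_det_pos det2_edges diameter_pos by auto
qed

text \<open>The parallelogram spanned by \<open>d ha\<close> and \<open>d hb\<close> lies in the open hexagon except for its
  vertex \<open>0\<close>, so it contains no other lattice point.\<close>
lemma lattice_generated: "l \<in> L \<Longrightarrow> \<exists>i j :: int. l = of_int i *\<^sub>R ha + of_int j *\<^sub>R hb"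
proof -
  assume "l \<in> L"
  obtain m1 m2 where m: "m1 \<bullet> ha = 1" "m1 \<bullet> hb = 0" "m2 \<bullet> ha = 0" "m2 \<bullet> hb = 1"
    and coords: "\<And>x. x = (m1 \<bullet> x) *\<^sub>R ha + (m2 \<bullet> x) *\<^sub>R hb"
    using biorthogonal_exists[OF det2_cevian_vectors] by blast
  define i where "i = \<lfloor>m1 \<bullet> l\<rfloor>"
  define j where "j = \<lfloor>m2 \<bullet> l\<rfloor>"
  define X where "X = m1 \<bullet> l - of_int i"
  define Y where "Y = m2 \<bullet> l - of_int j"
  have XY: "0 \<le> X" "X < 1" "0 \<le> Y" "Y < 1" unfolding X_def Y_def i_def j_def by linarith+
  define l' where "l' = l - of_int i *\<^sub>R ha - of_int j *\<^sub>R hb"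
  have "l' \<in> L" unfolding l'_def
    using \<open>l \<in> L\<close> cevian_vectors lattice_diff[OF lattice] lattice_of_int_scaleR[OF lattice] by blast
  have l': "l' = X *\<^sub>R ha + Y *\<^sub>R hb"
    using coords[of l] by (simp add: l'_def X_def Y_def algebra_simps)
  have "d *\<^sub>R l' = X *\<^sub>R (d *\<^sub>R ha) + Y *\<^sub>R (d *\<^sub>R hb)" by (simp add: l' scaleR_add_right mult.commute)
  also have "\<dots> = (X - X * \<alpha> - Y) *\<^sub>R (b - a) + (X * \<alpha> + Y - Y * \<alpha>) *\<^sub>R (c - a)"
    unfolding ha hb_frame by (simp add: algebra_simps)
  finally have dl': "d *\<^sub>R l' = (X - X * \<alpha> - Y) *\<^sub>R (b - a) + (X * \<alpha> + Y - Y * \<alpha>) *\<^sub>R (c - a)" .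
  have "0 \<le> X * \<alpha>" "X * \<alpha> \<le> X" "X * \<alpha> < \<alpha>" "0 \<le> Y * \<alpha>" "Y * \<alpha> \<le> Y"
    using XY alpha by (simp_all add: mult_left_le mult_strict_right_mono[of X 1 \<alpha>, simplified])
  moreover have "Y - Y * \<alpha> \<le> 1 - \<alpha>"
    using mult_nonneg_nonneg[of "1 - Y" "1 - \<alpha>"] XY alpha by (simp add: algebra_simps)
  ultimately have "\<bar>X - X * \<alpha> - Y\<bar> < 1" "\<bar>X * \<alpha> + Y - Y * \<alpha>\<bar> < 1"
    "\<bar>(X - X * \<alpha> - Y) + (X * \<alpha> + Y - Y * \<alpha>)\<bar> < 1"
    unfolding abs_less_iff using XY alpha by (intro conjI; linarith)+
  then have "l' = 0" using lattice_vector_eq_0_if_in_open_hexagon[OF \<open>l' \<in> L\<close> dl'] by blast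
  moreover have "m1 \<bullet> l' = X" "m2 \<bullet> l' = Y" by (simp_all add: l' inner_add_right m)
  ultimately have "X = 0" "Y = 0" by simp_all
  then have "l = of_int i *\<^sub>R ha + of_int j *\<^sub>R hb" using \<open>l' = 0\<close> by (simp add: l'_def algebra_simps)
  then show ?thesis by blast
qed

lemma edges_inner_cevian_vectors:
  "(1 - \<alpha> + \<alpha>\<^sup>2) * ((b - a) \<bullet> y) = d * ((1 - \<alpha>) * (ha \<bullet> y) - \<alpha> * (hb \<bullet> y))"
  "(1 - \<alpha> + \<alpha>\<^sup>2) * ((c - a) \<bullet> y) = d * (ha \<bullet> y + (1 - \<alpha>) * (hb \<bullet> y))"
  "(1 - \<alpha> + \<alpha>\<^sup>2) * ((c - b) \<bullet> y) = d * (\<alpha> * (ha \<bullet> y) + hb \<bullet> y)"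
proof -
  have inverse: "(1 - \<alpha> + \<alpha>\<^sup>2) * U = d * ((1 - \<alpha>) * A - \<alpha> * B)"
    "(1 - \<alpha> + \<alpha>\<^sup>2) * V = d * (A + (1 - \<alpha>) * B)"
    if "d * A = (1 - \<alpha>) * U + \<alpha> * V" "d * B = - U + (1 - \<alpha>) * V" for U V A B :: real
  proof -
    have "d * ((1 - \<alpha>) * A - \<alpha> * B) = (1 - \<alpha>) * (d * A) - \<alpha> * (d * B)"
      "d * (A + (1 - \<alpha>) * B) = d * A + (1 - \<alpha>) * (d * B)" by (simp_all add: algebra_simps)
    then show "(1 - \<alpha> + \<alpha>\<^sup>2) * U = d * ((1 - \<alpha>) * A - \<alpha> * B)"
      "(1 - \<alpha> + \<alpha>\<^sup>2) * V = d * (A + (1 - \<alpha>) * B)"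
      unfolding that by (simp_all add: algebra_simps power2_eq_square)
  qed
  have "d * (ha \<bullet> y) = (1 - \<alpha>) * ((b - a) \<bullet> y) + \<alpha> * ((c - a) \<bullet> y)"
    "d * (hb \<bullet> y) = - ((b - a) \<bullet> y) + (1 - \<alpha>) * ((c - a) \<bullet> y)"
    using arg_cong[OF ha, of "\<lambda>z. z \<bullet> y"] arg_cong[OF hb_frame, of "\<lambda>z. z \<bullet> y"]
    by (simp_all only: inner_add_left inner_scaleR_left)
  note eqs = inverse[OF this]
  show "(1 - \<alpha> + \<alpha>\<^sup>2) * ((b - a) \<bullet> y) = d * ((1 - \<alpha>) * (ha \<bullet> y) - \<alpha> * (hb \<bullet> y))"
    "(1 - \<alpha> + \<alpha>\<^sup>2) * ((c - a) \<bullet> y) = d * (ha \<bullet> y + (1 - \<alpha>) * (hb \<bullet> y))"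
    using eqs by simp_all
  have "(1 - \<alpha> + \<alpha>\<^sup>2) * ((c - b) \<bullet> y) =
      (1 - \<alpha> + \<alpha>\<^sup>2) * ((c - a) \<bullet> y) - (1 - \<alpha> + \<alpha>\<^sup>2) * ((b - a) \<bullet> y)"
    by (simp add: inner_diff_left algebra_simps)
  also have "\<dots> = d * (\<alpha> * (ha \<bullet> y) + hb \<bullet> y)"
    unfolding eqs by (simp add: algebra_simps)
  finally show "(1 - \<alpha> + \<alpha>\<^sup>2) * ((c - b) \<bullet> y) = d * (\<alpha> * (ha \<bullet> y) + hb \<bullet> y)" .
qed

lemma dir_width_ge:
  assumes y: "y \<in> dual_lattice L" "y \<noteq> 0"
  shows "d / (1 - \<alpha> + \<alpha>\<^sup>2) \<le> dir_width y T"
proof -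
  have "ha \<bullet> y \<in> \<int>" "hb \<bullet> y \<in> \<int>" using y(1) cevian_vectors by (auto simp: dual_lattice_def)
  then obtain m n :: int where mn: "ha \<bullet> y = of_int m" "hb \<bullet> y = of_int n" by (metis Ints_cases)
  have "m \<noteq> 0 \<or> n \<noteq> 0" using inner_eq_0_if_det2_ne_0[OF det2_cevian_vectors] y(2) mn by auto
  have edge: "\<bar>(p - q) \<bullet> y\<bar> \<le> dir_width y T" if "p \<in> {a, b, c}" "q \<in> {a, b, c}" for p q
  proof -
    have "bounded T" "p \<in> T" "q \<in> T"
      using that convex_body by (auto simp: convex_body_def compact_imp_bounded hull_inc)
    then show ?thesis using inner_diff_le_dir_width[of T p q y] inner_diff_le_dir_width[of T q p y]
      by (simp add: inner_commute inner_diff_right abs_le_iff)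
  qed
  then have edges: "\<bar>(b - a) \<bullet> y\<bar> \<le> dir_width y T" "\<bar>(c - a) \<bullet> y\<bar> \<le> dir_width y T"
    "\<bar>(c - b) \<bullet> y\<bar> \<le> dir_width y T" by simp_all
  have bound: "d \<le> (1 - \<alpha> + \<alpha>\<^sup>2) * dir_width y T"
    if "1 \<le> \<bar>q\<bar>" "(1 - \<alpha> + \<alpha>\<^sup>2) * (e \<bullet> y) = d * q" "\<bar>e \<bullet> y\<bar> \<le> dir_width y T" for q e
  proof -
    have "d \<le> d * \<bar>q\<bar>" using that(1) diameter_pos by simp
    also have "\<dots> = (1 - \<alpha> + \<alpha>\<^sup>2) * \<bar>e \<bullet> y\<bar>"
      using arg_cong[OF that(2), of abs] diameter_pos cevian_det_pos by (simp add: abs_mult)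
    also have "\<dots> \<le> (1 - \<alpha> + \<alpha>\<^sup>2) * dir_width y T"
      using that(3) cevian_det_pos by (simp add: mult_left_mono)
    finally show ?thesis .
  qed
  have "d \<le> (1 - \<alpha> + \<alpha>\<^sup>2) * dir_width y T"
    using int_pair_outside_open_hexagon[OF alpha \<open>m \<noteq> 0 \<or> n \<noteq> 0\<close>]
  proof (elim disjE)
    assume "1 \<le> \<bar>(1 - \<alpha>) * m - \<alpha> * n\<bar>"
    from bound[OF this edges_inner_cevian_vectors(1)[of y, unfolded mn] edges(1)] show ?thesis .
  next
    assume "1 \<le> \<bar>m + (1 - \<alpha>) * n\<bar>"
    from bound[OF this edges_inner_cevian_vectors(2)[of y, unfolded mn] edges(2)] show ?thesis .
  next
    assume "1 \<le> \<bar>\<alpha> * m + n\<bar>"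
    from bound[OF this edges_inner_cevian_vectors(3)[of y, unfolded mn] edges(3)] show ?thesis .
  qed
  then show ?thesis using cevian_det_pos by (simp add: divide_le_eq mult.commute)
qed

lemma dual_vector:
  obtains y where "y \<in> dual_lattice L" "ha \<bullet> y = 1" "hb \<bullet> y = - 1"
proof -
  obtain m1 m2 where m: "m1 \<bullet> ha = 1" "m1 \<bullet> hb = 0" "m2 \<bullet> ha = 0" "m2 \<bullet> hb = 1"
    using biorthogonal_exists[OF det2_cevian_vectors] by blast
  define y where "y = m1 - m2"
  have hy: "ha \<bullet> y = 1" "hb \<bullet> y = - 1" using m by (simp_all add: y_def inner_diff_right inner_commute)
  have "l \<bullet> y \<in> \<int>" if l: "l \<in> L" for l
  proof -
    obtain i j :: int where "l = of_int i *\<^sub>R ha + of_int j *\<^sub>R hb" using lattice_generated[OF l] by blast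
    then have "l \<bullet> y = of_int (i - j)" by (simp add: inner_add_left hy)
    then show ?thesis by simp
  qed
  then show ?thesis using that[of y] hy by (simp add: dual_lattice_def)
qed

lemma dual_vector_on_triangle:
  assumes y: "ha \<bullet> y = 1" "hb \<bullet> y = - 1" and "x \<in> T"
  shows "y \<bullet> (b - a) = d / (1 - \<alpha> + \<alpha>\<^sup>2)" "y \<bullet> a \<le> y \<bullet> x" "y \<bullet> x \<le> y \<bullet> b"
    and "y \<bullet> x = y \<bullet> a \<Longrightarrow> x = a" "y \<bullet> x = y \<bullet> b \<Longrightarrow> x = b"
proof -
  define k where "k = d / (1 - \<alpha> + \<alpha>\<^sup>2)"
  have "0 < k" using diameter_pos cevian_det_pos by (simp add: k_def)
  have edges: "y \<bullet> (b - a) = k" "y \<bullet> (c - a) = \<alpha> * k"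
    using edges_inner_cevian_vectors(1,2)[of y] cevian_det_pos
    by (simp_all add: y k_def field_simps inner_commute)
  then show "y \<bullet> (b - a) = d / (1 - \<alpha> + \<alpha>\<^sup>2)" by (simp add: k_def)
  have "y \<bullet> b = y \<bullet> a + k" using edges(1) by (simp add: inner_diff_right)
  obtain s t where st: "0 \<le> s" "0 \<le> t" "s + t \<le> 1" and x: "x = a + s *\<^sub>R (b - a) + t *\<^sub>R (c - a)"
    using \<open>x \<in> T\<close> unfolding convex_hull_3_alt by blast
  define z where "z = s + \<alpha> * t"
  have "y \<bullet> x = y \<bullet> a + s * (y \<bullet> (b - a)) + t * (y \<bullet> (c - a))"
    unfolding x by (simp only: inner_add_right inner_scaleR_right)
  also have "\<dots> = y \<bullet> a + k * z" unfolding edges z_def by (simp add: algebra_simps)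
  finally have yx: "y \<bullet> x = y \<bullet> a + k * z" .
  have "0 \<le> \<alpha> * t" "\<alpha> * t \<le> t" using st alpha by (simp_all add: mult_left_le_one_le)
  then have "0 \<le> z" "z \<le> 1" using st by (simp_all add: z_def)
  then have "0 \<le> k * z" "k * z \<le> k" using \<open>0 < k\<close> by (simp_all add: mult_left_le)
  then show "y \<bullet> a \<le> y \<bullet> x" "y \<bullet> x \<le> y \<bullet> b" using yx \<open>y \<bullet> b = y \<bullet> a + k\<close> by simp_all
  show "x = a" if "y \<bullet> x = y \<bullet> a"
  proof -
    have "s + \<alpha> * t = 0" using that yx \<open>0 < k\<close> by (simp add: z_def)
    then have "s = 0" "\<alpha> * t = 0" using st \<open>0 \<le> \<alpha> * t\<close> by linarith+
    then show ?thesis using x alpha by simp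
  qed
  show "x = b" if "y \<bullet> x = y \<bullet> b"
  proof -
    have "s + \<alpha> * t = 1" using that yx \<open>y \<bullet> b = y \<bullet> a + k\<close> \<open>0 < k\<close> by (simp add: z_def)
    then have "(1 - \<alpha>) * t \<le> 0" using st by (simp add: algebra_simps)
    then have "t = 0" using alpha st by (simp add: mult_le_0_iff)
    then show ?thesis using x \<open>s + \<alpha> * t = 1\<close> by simp
  qed
qed

lemma vertices_exposed: "\<exists>y. width_exposes L T y a" "\<exists>y. width_exposes L T y b"
proof -
  obtain y where y: "y \<in> dual_lattice L" "ha \<bullet> y = 1" "hb \<bullet> y = - 1" using dual_vector .
  have "y \<noteq> 0" using y(2) by auto
  note on_T = dual_vector_on_triangle[OF y(2,3)]
  have "a \<in> T" by (simp add: hull_inc)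
  then have "y \<bullet> b - y \<bullet> a = d / (1 - \<alpha> + \<alpha>\<^sup>2)" using on_T(1) by (simp add: inner_diff_right)
  also have "\<dots> \<le> lattice_width L T" using dir_width_ge y(1) \<open>y \<noteq> 0\<close> by (rule lattice_width_ge)
  finally have width: "y \<bullet> b - y \<bullet> a \<le> lattice_width L T" .
  have "T \<noteq> {}" by simp
  have "dir_width y T \<le> y \<bullet> b - y \<bullet> a"
    using on_T(2,3) by (intro dir_width_le[OF \<open>T \<noteq> {}\<close>]) blast
  moreover have "y \<bullet> x < y \<bullet> b" if "x \<in> T" "x \<noteq> b" for x
    using on_T(3,5)[OF that(1)] that(2) by fastforce
  ultimately show "\<exists>y. width_exposes L T y b"
    using y(1) \<open>y \<noteq> 0\<close> width by (auto simp: width_exposes_def)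
  have "dir_width (- y) T \<le> (- (y \<bullet> a)) - (- (y \<bullet> b))"
    using on_T(2,3) by (intro dir_width_le[OF \<open>T \<noteq> {}\<close>]) auto
  moreover have "- y \<bullet> x < - y \<bullet> a" if "x \<in> T" "x \<noteq> a" for x
    using on_T(2,4)[OF that(1)] that(2) by fastforce
  ultimately show "\<exists>y. width_exposes L T y a"
    using dual_lattice_uminus[OF y(1)] \<open>y \<noteq> 0\<close> width by (auto simp: width_exposes_def)
qed

end

lemma lattice_complete_triangle_imp_reduced:
  assumes L: "is_lattice L" and "is_triangle T" and complete: "lattice_complete L T"
  shows "lattice_reduced L T"
proof -
  obtain a b c where nc: "\<not> collinear {a, b, c}" and T: "T = convex hull {a, b, c}"
    using \<open>is_triangle T\<close> unfolding is_triangle_def by blast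
  have rot: "{b, c, a} = {a, b, c}" "{c, a, b} = {a, b, c}" by auto
  interpret abc: lattice_triangle L a b c using L nc by unfold_locales
  interpret bca: lattice_triangle L b c a using L nc by unfold_locales (simp_all add: rot)
  interpret cab: lattice_triangle L c a b using L nc by unfold_locales (simp_all add: rot)
  obtain ha \<alpha> where ha: "ha \<in> L" "0 < \<alpha>" "\<alpha> < 1"
    "lattice_diameter L T *\<^sub>R ha = (1 - \<alpha>) *\<^sub>R (b - a) + \<alpha> *\<^sub>R (c - a)"
    using abc.cevian complete T by metis
  obtain hb \<beta> where hb: "hb \<in> L" "0 < \<beta>" "\<beta> < 1"
    "lattice_diameter L T *\<^sub>R hb = (1 - \<beta>) *\<^sub>R (c - b) + \<beta> *\<^sub>R (a - b)"
    using bca.cevian complete T rot by metis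
  obtain hc \<gamma> where hc: "hc \<in> L" "0 < \<gamma>" "\<gamma> < 1"
    "lattice_diameter L T *\<^sub>R hc = (1 - \<gamma>) *\<^sub>R (a - c) + \<gamma> *\<^sub>R (b - c)"
    using cab.cevian complete T rot by metis
  have "\<beta> = \<alpha>" "\<gamma> = \<alpha>"
    using abc.cevian_parameters_eq[OF ha(1) hb(1) hc(1) ha(2,3) hb(2,3) hc(2,3)] ha(4) hb(4) hc(4) T
    by simp_all
  interpret abc: cevian_basis L a b c \<alpha> ha hb
    using ha hb T \<open>\<beta> = \<alpha>\<close> by unfold_locales simp_all
  interpret bca: cevian_basis L b c a \<alpha> hb hc
    using ha hb hc T rot \<open>\<beta> = \<alpha>\<close> \<open>\<gamma> = \<alpha>\<close> by unfold_locales simp_all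
  show ?thesis
  proof (rule lattice_reducedI)
    show "convex_body T" "T = convex hull {a, b, c}" using abc.convex_body T by simp_all
    show "\<exists>y. width_exposes L T y p" if "p \<in> {a, b, c}" for p
      \<comment> \<open>in the rotated frame \<open>(b, c, a)\<close> the vertex exposed second is \<open>c\<close>\<close>
      using that abc.vertices_exposed bca.vertices_exposed(2) T rot by auto
  qed
qed

section \<open>A reduced triangle that is not complete\<close>

definition int_lattice :: "pt set" where
  "int_lattice = {x. x$1 \<in> \<int> \<and> x$2 \<in> \<int>}"

definition e1 :: pt where "e1 = axis 1 1"

definition e2 :: pt where "e2 = axis 2 1"

definition std_triangle :: "pt set" where
  "std_triangle = convex hull {0, e1, e2}"

definition unit_square :: "pt set" where
  "unit_square = cbox 0 (e1 + e2)"

lemma e1_e2_nth [simp]: "e1$1 = 1" "e1$2 = 0" "e2$1 = 0" "e2$2 = 1"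
  by (simp_all add: e1_def e2_def axis_def)

lemma pt_eq_coords: "(x::pt) = x$1 *\<^sub>R e1 + x$2 *\<^sub>R e2"
  unfolding vec_eq_iff forall_2 by simp

lemma is_lattice_int_lattice: "is_lattice int_lattice"
  unfolding is_lattice_def
proof (intro conjI)
  show "0 \<in> int_lattice" "\<forall>x\<in>int_lattice. \<forall>y\<in>int_lattice. x - y \<in> int_lattice"
    by (simp_all add: int_lattice_def Ints_diff)
  have "1 \<le> norm x" if x: "x \<in> int_lattice" "x \<noteq> 0" for x
  proof -
    obtain i where "x$i \<noteq> 0" using x(2) by (auto simp: vec_eq_iff)
    moreover have "x$i \<in> \<int>" using x(1) exhaust_2[of i] by (auto simp: int_lattice_def)
    ultimately show ?thesis using Ints_nonzero_abs_ge1 component_le_norm_cart[of x i] by fastforce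
  qed
  then show "\<exists>e>0. \<forall>x\<in>int_lattice. x \<noteq> 0 \<longrightarrow> e \<le> norm x" by (intro exI[of _ 1]) auto
  have "e1 \<in> int_lattice" "e2 \<in> int_lattice" by (simp_all add: int_lattice_def)
  then have "x \<in> span int_lattice" for x
    using pt_eq_coords[of x] by (metis span_add span_base span_scale)
  then show "span int_lattice = UNIV" by auto
qed

lemma dual_int_lattice: "dual_lattice int_lattice = int_lattice"
proof (intro set_eqI iffI)
  fix y assume "y \<in> dual_lattice int_lattice"
  moreover have "e1 \<in> int_lattice" "e2 \<in> int_lattice" by (simp_all add: int_lattice_def)
  ultimately have "e1 \<bullet> y \<in> \<int>" "e2 \<bullet> y \<in> \<int>" by (auto simp: dual_lattice_def)
  then show "y \<in> int_lattice" by (simp add: int_lattice_def inner_real2)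
qed (auto simp: dual_lattice_def int_lattice_def inner_real2)

lemma mem_std_triangle: "x \<in> std_triangle \<longleftrightarrow> 0 \<le> x$1 \<and> 0 \<le> x$2 \<and> x$1 + x$2 \<le> 1"
proof
  assume "x \<in> std_triangle"
  then obtain s t where "0 \<le> s" "0 \<le> t" "s + t \<le> 1" "x = s *\<^sub>R e1 + t *\<^sub>R e2"
    unfolding std_triangle_def convex_hull_3_alt by auto
  then show "0 \<le> x$1 \<and> 0 \<le> x$2 \<and> x$1 + x$2 \<le> 1" by simp
next
  assume "0 \<le> x$1 \<and> 0 \<le> x$2 \<and> x$1 + x$2 \<le> 1"
  then show "x \<in> std_triangle"
    using triangle_point[of "x$1" "x$2" 0 e1 e2] pt_eq_coords[of x] by (simp add: std_triangle_def)
qed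

lemma not_collinear_std_triangle: "\<not> collinear {0, e1, e2}"
proof
  assume "collinear {0, e1, e2}"
  then obtain c where "e2 = c *\<^sub>R e1" by (auto simp: collinear_lemma e1_def axis_eq_0_iff)
  then have "e2$2 = (c *\<^sub>R e1)$2" by simp
  then show False by simp
qed

lemma is_triangle_std_triangle: "is_triangle std_triangle"
  unfolding is_triangle_def std_triangle_def using not_collinear_std_triangle by blast

lemma convex_body_std_triangle: "convex_body std_triangle"
  unfolding std_triangle_def using convex_body_triangle[OF not_collinear_std_triangle] .

lemma lattice_width_std_triangle_ge: "1 \<le> lattice_width int_lattice std_triangle"
proof -
  have "e1 \<in> std_triangle" "e2 \<in> std_triangle" "0 \<in> std_triangle" by (simp_all add: mem_std_triangle)
  have "bounded std_triangle"
    using convex_body_std_triangle by (simp add: convex_body_def compact_imp_bounded)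
  have "1 \<le> dir_width y std_triangle" if y: "y \<in> dual_lattice int_lattice" "y \<noteq> 0" for y
  proof -
    obtain i where "y$i \<noteq> 0" using y(2) by (auto simp: vec_eq_iff)
    moreover have "y$i \<in> \<int>"
      using y(1) exhaust_2[of i] unfolding dual_int_lattice by (auto simp: int_lattice_def)
    moreover have "\<bar>y$i\<bar> \<le> dir_width y std_triangle"
      using exhaust_2[of i]
    proof (elim disjE)
      assume "i = 1"
      then show ?thesis
        using inner_diff_le_dir_width[OF \<open>bounded std_triangle\<close> \<open>e1 \<in> std_triangle\<close> \<open>0 \<in> _\<close>, of y]
          inner_diff_le_dir_width[OF \<open>bounded std_triangle\<close> \<open>0 \<in> _\<close> \<open>e1 \<in> std_triangle\<close>, of y]
        by (simp add: inner_real2 abs_le_iff)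
    next
      assume "i = 2"
      then show ?thesis
        using inner_diff_le_dir_width[OF \<open>bounded std_triangle\<close> \<open>e2 \<in> std_triangle\<close> \<open>0 \<in> _\<close>, of y]
          inner_diff_le_dir_width[OF \<open>bounded std_triangle\<close> \<open>0 \<in> _\<close> \<open>e2 \<in> std_triangle\<close>, of y]
        by (simp add: inner_real2 abs_le_iff)
    qed
    ultimately show ?thesis using Ints_nonzero_abs_ge1 by fastforce
  qed
  moreover have "e1 \<in> dual_lattice int_lattice" unfolding dual_int_lattice by (simp add: int_lattice_def)
  moreover have "e1 \<noteq> 0" by (metis e1_e2_nth(1) zero_index zero_neq_one)
  ultimately show ?thesis by (rule lattice_width_ge)
qed

lemma lattice_reduced_std_triangle: "lattice_reduced int_lattice std_triangle"
proof (rule lattice_reducedI)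
  show "convex_body std_triangle" "std_triangle = convex hull {0, e1, e2}"
    using convex_body_std_triangle by (simp_all add: std_triangle_def)
  have exposes: "width_exposes int_lattice std_triangle y p"
    if "y \<in> int_lattice" "y \<noteq> 0" "\<And>x. x \<in> std_triangle \<Longrightarrow> y \<bullet> p - 1 \<le> y \<bullet> x \<and> y \<bullet> x \<le> y \<bullet> p"
      "\<And>x. x \<in> std_triangle \<Longrightarrow> x \<noteq> p \<Longrightarrow> y \<bullet> x < y \<bullet> p" for y p
  proof -
    have "dir_width y std_triangle \<le> y \<bullet> p - (y \<bullet> p - 1)"
      using that(3) by (intro dir_width_le) (auto simp: std_triangle_def)
    then show ?thesis
      using that lattice_width_std_triangle_ge by (simp add: width_exposes_def dual_int_lattice)
  qed
  show "\<exists>y. width_exposes int_lattice std_triangle y p" if "p \<in> {0, e1, e2}" for p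
  proof -
    have "width_exposes int_lattice std_triangle (- (e1 + e2)) 0"
      by (rule exposes) (auto simp: int_lattice_def vec_eq_iff forall_2 mem_std_triangle inner_real2)
    moreover have "width_exposes int_lattice std_triangle e1 e1"
      by (rule exposes) (auto simp: int_lattice_def vec_eq_iff forall_2 mem_std_triangle inner_real2)
    moreover have "width_exposes int_lattice std_triangle e2 e2"
      by (rule exposes) (auto simp: int_lattice_def vec_eq_iff forall_2 mem_std_triangle inner_real2)
    ultimately show ?thesis using that by blast
  qed
qed

lemma mem_unit_square: "x \<in> unit_square \<longleftrightarrow> 0 \<le> x$1 \<and> x$1 \<le> 1 \<and> 0 \<le> x$2 \<and> x$2 \<le> 1"
  unfolding unit_square_def mem_box_cart forall_2 by simp

lemma lattice_lengths_unit_square_le: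
  assumes "l \<in> lattice_lengths int_lattice unit_square"
  shows "l \<le> 1"
proof -
  obtain x y w where xy: "x \<in> unit_square" "y \<in> unit_square" and w: "w \<in> int_lattice" "w \<noteq> 0"
    and "0 < l" "y - x = l *\<^sub>R w"
    using lattice_lengths_witness[OF assms] .
  obtain i where "w$i \<noteq> 0" using w(2) by (auto simp: vec_eq_iff)
  moreover have "w$i \<in> \<int>" using w(1) exhaust_2[of i] by (auto simp: int_lattice_def)
  ultimately have "1 \<le> \<bar>w$i\<bar>" by (rule Ints_nonzero_abs_ge1[rotated])
  have "\<bar>(y - x)$i\<bar> \<le> 1" using xy exhaust_2[of i] by (auto simp: mem_unit_square)
  then have "l * \<bar>w$i\<bar> \<le> 1" using \<open>0 < l\<close> \<open>y - x = l *\<^sub>R w\<close> by (simp add: abs_mult)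
  moreover have "l * 1 \<le> l * \<bar>w$i\<bar>" using \<open>1 \<le> \<bar>w$i\<bar>\<close> \<open>0 < l\<close> by (intro mult_left_mono) auto
  ultimately show ?thesis by simp
qed

lemma convex_body_unit_square: "convex_body unit_square"
proof -
  have "(1/2) *\<^sub>R (e1 + e2) \<in> box 0 (e1 + e2)" unfolding mem_box_cart forall_2 by simp
  then show ?thesis by (auto simp: convex_body_def unit_square_def)
qed

lemma std_triangle_psubset_unit_square: "std_triangle \<subset> unit_square"
proof -
  have "std_triangle \<subseteq> unit_square" by (auto simp: mem_std_triangle mem_unit_square)
  moreover have "e1 + e2 \<in> unit_square" "e1 + e2 \<notin> std_triangle"
    by (simp_all add: mem_std_triangle mem_unit_square)
  ultimately show ?thesis by blast
qed

lemma not_lattice_complete_std_triangle: "\<not> lattice_complete int_lattice std_triangle"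
proof
  assume complete: "lattice_complete int_lattice std_triangle"
  have "bounded std_triangle" "bounded unit_square"
    using convex_body_std_triangle convex_body_unit_square
    by (simp_all add: convex_body_def compact_imp_bounded)
  have "lattice_diameter int_lattice unit_square \<le> 1"
    unfolding lattice_diameter_def
    using lattice_lengths_nonempty[OF is_lattice_int_lattice convex_body_unit_square]
      lattice_lengths_unit_square_le
    by (intro cSup_least) auto
  moreover have "1 \<le> lattice_diameter int_lattice std_triangle"
    using lattice_diameter_ge[OF is_lattice_int_lattice \<open>bounded std_triangle\<close>, of 0 e1 e1 1]
    by (simp add: mem_std_triangle int_lattice_def) (metis e1_e2_nth(1) zero_index zero_neq_one)
  moreover have "lattice_diameter int_lattice std_triangle \<le> lattice_diameter int_lattice unit_square"
    using lattice_diameter_mono[OF is_lattice_int_lattice convex_body_std_triangle _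
        \<open>bounded unit_square\<close>] std_triangle_psubset_unit_square by blast
  ultimately have "lattice_diameter int_lattice unit_square = lattice_diameter int_lattice std_triangle"
    by linarith
  then show False
    using complete convex_body_unit_square std_triangle_psubset_unit_square
    unfolding lattice_complete_def by blast
qed

theorem theorem1p4:
  shows "(\<forall>L T. is_lattice L \<and> is_triangle T \<and> lattice_complete L T \<longrightarrow> lattice_reduced L T) \<and>
         (\<exists>L T. is_lattice L \<and> is_triangle T \<and> lattice_reduced L T \<and> \<not> lattice_complete L T)"
  using lattice_complete_triangle_imp_reduced
    is_lattice_int_lattice is_triangle_std_triangle lattice_reduced_std_triangle
    not_lattice_complete_std_triangle
  by blast

end
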